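(* Let $G$ be a finite group and let $\chi$ be the character of an irreducible complex representation of $G$ of dimension $n$. Then for every $g\in G$, $$c(g)\le\frac12\Big(1+\frac{1}{n^3}\mathrm{Re}(\chi(g))\Big),$$ and in particular $$c(G)\le\frac12\Big(1+\frac1{n^2}\Big).$$
   Context: For $g\in G$, $c(g)=|\{(x,y)\in G\times G:[x,y]=g\}|/|G|^2$, and $c(G)=c(1)$ (the commuting probability). *)

theory Defs
  imports "HOL-Algebra.Group" "Jordan_Normal_Form.Matrix"
begin

definition representation :: "('g, 'b) monoid_scheme \<Rightarrow> nat \<Rightarrow> ('g \<Rightarrow> complex mat) \<Rightarrow> bool" where
  "representation G n \<rho> \<longleftrightarrow>
     (\<forall>g\<in>carrier G. \<rho> g \<in> carrier_mat n n) \<and>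
     \<rho> \<one>\<^bsub>G\<^esub> = 1\<^sub>m n \<and>
     (\<forall>g\<in>carrier G. \<forall>h\<in>carrier G. \<rho> (g \<otimes>\<^bsub>G\<^esub> h) = \<rho> g * \<rho> h)"

definition invariant_subspace :: "('g, 'b) monoid_scheme \<Rightarrow> nat \<Rightarrow> ('g \<Rightarrow> complex mat) \<Rightarrow> complex vec set \<Rightarrow> bool" where
  "invariant_subspace G n \<rho> W \<longleftrightarrow>
     W \<subseteq> carrier_vec n \<and> 0\<^sub>v n \<in> W \<and>
     (\<forall>v\<in>W. \<forall>w\<in>W. v + w \<in> W) \<and>
     (\<forall>a::complex. \<forall>v\<in>W. a \<cdot>\<^sub>v v \<in> W) \<and>
     (\<forall>g\<in>carrier G. \<forall>v\<in>W. \<rho> g *\<^sub>v v \<in> W)"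

definition irreducible_representation :: "('g, 'b) monoid_scheme \<Rightarrow> nat \<Rightarrow> ('g \<Rightarrow> complex mat) \<Rightarrow> bool" where
  "irreducible_representation G n \<rho> \<longleftrightarrow>
     representation G n \<rho> \<and> n > 0 \<and>
     (\<forall>W. invariant_subspace G n \<rho> W \<longrightarrow> W = {0\<^sub>v n} \<or> W = carrier_vec n)"

definition mat_trace :: "complex mat \<Rightarrow> complex" where
  "mat_trace A = (\<Sum>i<dim_row A. A $$ (i, i))"

definition character :: "('g \<Rightarrow> complex mat) \<Rightarrow> 'g \<Rightarrow> complex" where
  "character \<rho> g = mat_trace (\<rho> g)"

definition commutator :: "('g, 'b) monoid_scheme \<Rightarrow> 'g \<Rightarrow> 'g \<Rightarrow> 'g" where
  "commutator G x y = inv\<^bsub>G\<^esub> x \<otimes>\<^bsub>G\<^esub> inv\<^bsub>G\<^esub> y \<otimes>\<^bsub>G\<^esub> x \<otimes>\<^bsub>G\<^esub> y"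

definition comm_count :: "('g, 'b) monoid_scheme \<Rightarrow> 'g \<Rightarrow> real" where
  "comm_count G g = real (card {(x, y). x \<in> carrier G \<and> y \<in> carrier G \<and> commutator G x y = g})
                     / real (card (carrier G)) ^ 2"

definition comm_prob :: "('g, 'b) monoid_scheme \<Rightarrow> real" where
  "comm_prob G = comm_count G \<one>\<^bsub>G\<^esub>"

end

(* Averaging the conjugates rho(y)^-1 B rho(y) over G gives a matrix commuting with the
   irreducible representation rho, so by Schur's lemma it is the scalar |G| tr(B) / n.
   Applied twice, this gives the Schur orthogonality relations and then
     sum over x, y of chi(g [x,y]) = |G|^2 chi(g) / n^2.
   Read this sum with x and y swapped: as [y,x] = [x,y]^-1, each of the N = |G|^2 c(g) pairs
   with [x,y] = g contributes chi(1) = n, while every other term has real part at least -n,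
   since rho(k) has finite order and so its eigenvalues are roots of unity. Hence
   n N - n (|G|^2 - N) <= |G|^2 Re chi(g) / n^2, which is the bound; g = 1 gives c(G). *)

theory Submission
  imports Defs "Jordan_Normal_Form.Schur_Decomposition" "HOL-Algebra.Multiplicative_Group"
begin

section \<open>Matrices\<close>

lemma index_mult_mat_sum:
  assumes "A \<in> carrier_mat n m" "B \<in> carrier_mat m k" "i < n" "j < k"
  shows "(A * B) $$ (i, j) = (\<Sum>l<m. A $$ (i, l) * B $$ (l, j))"
  using assms by (simp add: scalar_prod_def lessThan_atLeast0)

lemma mat_trace_eq_sum: "A \<in> carrier_mat n n \<Longrightarrow> mat_trace A = (\<Sum>i<n. A $$ (i, i))"
  by (simp add: mat_trace_def)

lemma mat_trace_mult_eq_sum: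
  assumes "A \<in> carrier_mat n m" "B \<in> carrier_mat m n"
  shows "mat_trace (A * B) = (\<Sum>i<n. \<Sum>j<m. A $$ (i, j) * B $$ (j, i))"
  using assms unfolding mat_trace_eq_sum[OF mult_carrier_mat[OF assms]]
  by (intro sum.cong refl index_mult_mat_sum) auto

lemma mat_trace_mult_comm:
  assumes "A \<in> carrier_mat n m" "B \<in> carrier_mat m n"
  shows "mat_trace (A * B) = mat_trace (B * A)"
  using assms by (simp add: mat_trace_mult_eq_sum sum.swap[of _ "{..<n}"] mult.commute)

lemma mat_trace_smult: "A \<in> carrier_mat n n \<Longrightarrow> mat_trace (c \<cdot>\<^sub>m A) = c * mat_trace A"
  by (simp add: mat_trace_eq_sum[of _ n] sum_distrib_left)

lemma mat_trace_one: "mat_trace (1\<^sub>m n) = of_nat n"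
  by (simp add: mat_trace_def)

text \<open>Entrywise sum of a family of n x n matrices: the type of matrices of all dimensions
  is not a monoid, so the big operator \<open>\<Sum>\<close> does not apply to it.\<close>
definition mat_sum :: "nat \<Rightarrow> ('a \<Rightarrow> 'b :: comm_monoid_add mat) \<Rightarrow> 'a set \<Rightarrow> 'b mat" where
  "mat_sum n f X = mat n n (\<lambda>(i, j). \<Sum>x\<in>X. f x $$ (i, j))"

lemma mat_sum_carrier [simp]: "mat_sum n f X \<in> carrier_mat n n"
  and dim_row_mat_sum [simp]: "dim_row (mat_sum n f X) = n"
  and dim_col_mat_sum [simp]: "dim_col (mat_sum n f X) = n"
  by (simp_all add: mat_sum_def)

lemma index_mat_sum [simp]:
  "i < n \<Longrightarrow> j < n \<Longrightarrow> mat_sum n f X $$ (i, j) = (\<Sum>x\<in>X. f x $$ (i, j))"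
  by (simp add: mat_sum_def)

lemma mat_sum_cong: "(\<And>x. x \<in> X \<Longrightarrow> f x = g x) \<Longrightarrow> mat_sum n f X = mat_sum n g X"
  unfolding mat_sum_def by (intro cong_mat refl sum.cong) auto

lemma mat_sum_reindex_bij_betw:
  "bij_betw h X Y \<Longrightarrow> mat_sum n (\<lambda>x. f (h x)) X = mat_sum n f Y"
  unfolding mat_sum_def by (intro cong_mat refl) (auto intro: sum.reindex_bij_betw)

lemma mat_sum_mult:
  fixes f :: "'a \<Rightarrow> 'b :: semiring_0 mat"
  assumes "\<And>x. x \<in> X \<Longrightarrow> f x \<in> carrier_mat n n" "C \<in> carrier_mat n n"
  shows "mat_sum n f X * C = mat_sum n (\<lambda>x. f x * C) X"
proof (rule eq_matI)
  fix i j assume "i < dim_row (mat_sum n (\<lambda>x. f x * C) X)" "j < dim_col (mat_sum n (\<lambda>x. f x * C) X)"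
  then have ij: "i < n" "j < n" by simp_all
  have "(mat_sum n f X * C) $$ (i, j) = (\<Sum>l<n. (\<Sum>x\<in>X. f x $$ (i, l)) * C $$ (l, j))"
    using assms ij by (subst index_mult_mat_sum[of _ n n _ n]) simp_all
  also have "\<dots> = (\<Sum>x\<in>X. \<Sum>l<n. f x $$ (i, l) * C $$ (l, j))"
    by (simp add: sum_distrib_right sum.swap[of _ "{..<n}"])
  also have "\<dots> = mat_sum n (\<lambda>x. f x * C) X $$ (i, j)"
    using assms ij by (simp add: index_mult_mat_sum[of _ n n _ n])
  finally show "(mat_sum n f X * C) $$ (i, j) = mat_sum n (\<lambda>x. f x * C) X $$ (i, j)" .
qed (use assms in auto)

lemma mult_mat_sum:
  fixes f :: "'a \<Rightarrow> 'b :: semiring_0 mat"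
  assumes "\<And>x. x \<in> X \<Longrightarrow> f x \<in> carrier_mat n n" "C \<in> carrier_mat n n"
  shows "C * mat_sum n f X = mat_sum n (\<lambda>x. C * f x) X"
proof (rule eq_matI)
  fix i j assume "i < dim_row (mat_sum n (\<lambda>x. C * f x) X)" "j < dim_col (mat_sum n (\<lambda>x. C * f x) X)"
  then have ij: "i < n" "j < n" by simp_all
  have "(C * mat_sum n f X) $$ (i, j) = (\<Sum>l<n. C $$ (i, l) * (\<Sum>x\<in>X. f x $$ (l, j)))"
    using assms ij by (subst index_mult_mat_sum[of _ n n _ n]) simp_all
  also have "\<dots> = (\<Sum>x\<in>X. \<Sum>l<n. C $$ (i, l) * f x $$ (l, j))"
    by (simp add: sum_distrib_left sum.swap[of _ "{..<n}"])
  also have "\<dots> = mat_sum n (\<lambda>x. C * f x) X $$ (i, j)"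
    using assms ij by (simp add: index_mult_mat_sum[of _ n n _ n])
  finally show "(C * mat_sum n f X) $$ (i, j) = mat_sum n (\<lambda>x. C * f x) X $$ (i, j)" .
qed (use assms in auto)

lemma mat_trace_mat_sum:
  assumes "\<And>x. x \<in> X \<Longrightarrow> f x \<in> carrier_mat n n"
  shows "mat_trace (mat_sum n f X) = (\<Sum>x\<in>X. mat_trace (f x))"
  using assms by (simp add: mat_trace_eq_sum[of _ n] sum.swap[of _ "{..<n}"])

definition matrix_unit :: "nat \<Rightarrow> nat \<Rightarrow> nat \<Rightarrow> 'a :: zero_neq_one mat" where
  "matrix_unit n k l = mat n n (\<lambda>(i, j). if i = k \<and> j = l then 1 else 0)"

lemma matrix_unit_carrier [simp]: "matrix_unit n k l \<in> carrier_mat n n"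
  by (simp add: matrix_unit_def)

lemma mat_trace_matrix_unit: "k < n \<Longrightarrow> mat_trace (matrix_unit n k l) = (if k = l then 1 else 0)"
  by (simp add: mat_trace_eq_sum[of _ n] matrix_unit_def)

lemma index_mult_matrix_unit_mult:
  fixes A B :: "'a :: semiring_1 mat"
  assumes "A \<in> carrier_mat n n" "B \<in> carrier_mat n n" "i < n" "j < n" "k < n" "l < n"
  shows "(A * matrix_unit n k l * B) $$ (i, j) = A $$ (i, k) * B $$ (l, j)"
proof -
  have row: "(A * matrix_unit n k l) $$ (i, m) = (if m = l then A $$ (i, k) else 0)" if "m < n" for m
    using assms that
    by (subst index_mult_mat_sum[of _ n n _ n]) (simp_all add: matrix_unit_def if_distrib cong: if_cong)
  have "(A * matrix_unit n k l * B) $$ (i, j) = (\<Sum>m<n. (A * matrix_unit n k l) $$ (i, m) * B $$ (m, j))"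
    using assms by (intro index_mult_mat_sum) auto
  also have "\<dots> = (\<Sum>m<n. if m = l then A $$ (i, k) * B $$ (m, j) else 0)"
    using row by (intro sum.cong) auto
  finally show ?thesis
    using assms by simp
qed

section \<open>Eigenvalues of complex matrices\<close>

lemma poly_prod_list_linear_root:
  fixes es :: "'a :: comm_ring_1 list"
  shows "e \<in> set es \<Longrightarrow> poly (\<Prod>a\<leftarrow>es. [:- a, 1:]) e = 0"
  by (induction es) auto

lemma mat_trace_eq_sum_eigenvalues:
  fixes A :: "complex mat"
  assumes A: "A \<in> carrier_mat n n"
  obtains es where "\<forall>e\<in>set es. eigenvalue A e" "length es = n" "mat_trace A = sum_list es"
proof -
  obtain es where es: "char_poly A = (\<Prod>a\<leftarrow>es. [:- a, 1:])" "length es = n"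
    using char_poly_factorized[OF A] by blast
  obtain B P Q where "schur_decomposition A es = (B, P, Q)"
    by (cases "schur_decomposition A es") auto
  from schur_decomposition[OF A es(1) this]
  have sim: "similar_mat_wit A B P Q" and diag: "diag_mat B = es" by blast+
  from similar_mat_witD2[OF A sim]
  have B: "B \<in> carrier_mat n n" and P: "P \<in> carrier_mat n n" and Q: "Q \<in> carrier_mat n n"
    and QP: "Q * P = 1\<^sub>m n" and APBQ: "A = P * B * Q" by blast+
  have "mat_trace A = mat_trace (Q * (P * B))"
    using APBQ mat_trace_mult_comm[OF mult_carrier_mat[OF P B] Q] by simp
  also have "Q * (P * B) = B"
    using B P Q QP by (simp flip: assoc_mult_mat)
  also have "mat_trace B = sum_list es"
    using B by (simp add: mat_trace_def diag[symmetric] diag_mat_def sum_list_sum_nth lessThan_atLeast0)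
  finally have "mat_trace A = sum_list es" .
  moreover have "\<forall>e\<in>set es. eigenvalue A e"
    using es(1) A by (simp add: eigenvalue_root_char_poly poly_prod_list_linear_root)
  ultimately show thesis
    using that es(2) by blast
qed

lemma Re_mat_trace_ge:
  fixes A :: "complex mat"
  assumes "A \<in> carrier_mat n n" and "\<And>e. eigenvalue A e \<Longrightarrow> cmod e \<le> 1"
  shows "- real n \<le> Re (mat_trace A)"
proof -
  obtain es where es: "\<forall>e\<in>set es. eigenvalue A e" "length es = n" "mat_trace A = sum_list es"
    using mat_trace_eq_sum_eigenvalues[OF assms(1)] by blast
  have "- real (length es) \<le> Re (sum_list es)" if "\<forall>e\<in>set es. cmod e \<le> 1" for es
    using that by (induction es) (auto dest!: abs_Re_le_cmod[THEN order_trans])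
  then show ?thesis
    using es assms(2) by auto
qed

lemma eigenvalue_exists:
  fixes A :: "complex mat"
  assumes "A \<in> carrier_mat n n" "n > 0"
  obtains e where "eigenvalue A e"
proof -
  obtain es where es: "char_poly A = (\<Prod>a\<leftarrow>es. [:- a, 1:])" "length es = n"
    using char_poly_factorized[OF assms(1)] by blast
  then have "hd es \<in> set es"
    using assms(2) by (cases es) auto
  then have "poly (char_poly A) (hd es) = 0"
    unfolding es(1) by (rule poly_prod_list_linear_root)
  then show thesis
    using that eigenvalue_root_char_poly[OF assms(1)] by blast
qed

lemma cmod_eigenvalue_eq_1:
  fixes A :: "complex mat"
  assumes A: "A \<in> carrier_mat n n" and "A ^\<^sub>m m = 1\<^sub>m n" "m > 0" and "eigenvalue A e"
  shows "cmod e = 1"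
proof -
  obtain v where v: "eigenvector A v e"
    using assms(4) unfolding eigenvalue_def by blast
  then have vc: "v \<in> carrier_vec n" "v \<noteq> 0\<^sub>v n"
    using A unfolding eigenvector_def by auto
  then obtain i where i: "i < n" "v $ i \<noteq> 0"
    by (metis eq_vecI carrier_vecD index_zero_vec)
  have "v = e ^ m \<cdot>\<^sub>v v"
    using eigenvector_pow[OF A v, of m] assms(2) vc by simp
  then have "v $ i = e ^ m * v $ i"
    using i vc by (metis carrier_vecD index_smult_vec(1))
  then have "e ^ m = 1"
    using i by simp
  then have "cmod e ^ m = 1"
    by (metis norm_one norm_power)
  then show ?thesis
    using assms(3) power_eq_iff_eq_base[of m "cmod e" 1] by simp
qed

section \<open>Representations of groups\<close>

lemma (in group) bij_betw_mult_right:
  "g \<in> carrier G \<Longrightarrow> bij_betw (\<lambda>x. x \<otimes> g) (carrier G) (carrier G)"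
  by (rule bij_betwI[where g = "\<lambda>x. x \<otimes> inv g"]) (auto simp: m_assoc)

lemma (in group) commutator_swap:
  "x \<in> carrier G \<Longrightarrow> y \<in> carrier G \<Longrightarrow> commutator G y x = inv (commutator G x y)"
  by (simp add: commutator_def inv_mult_group m_assoc)

locale group_rep = group G for G (structure) +
  fixes n :: nat and \<rho> :: "'a \<Rightarrow> complex mat"
  assumes representation: "representation G n \<rho>"
begin

lemma rep_carrier [simp]: "g \<in> carrier G \<Longrightarrow> \<rho> g \<in> carrier_mat n n"
  and rep_one [simp]: "\<rho> \<one> = 1\<^sub>m n"
  and rep_mult: "g \<in> carrier G \<Longrightarrow> h \<in> carrier G \<Longrightarrow> \<rho> (g \<otimes> h) = \<rho> g * \<rho> h"
  using representation by (simp_all add: representation_def)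

lemma rep_mult_inv [simp]: "g \<in> carrier G \<Longrightarrow> \<rho> g * \<rho> (inv g) = 1\<^sub>m n"
  by (simp flip: rep_mult)

lemma rep_pow: assumes "g \<in> carrier G" shows "\<rho> g ^\<^sub>m k = \<rho> (g [^] k)"
  using assms carrier_matD[OF rep_carrier[OF assms]] by (induction k) (simp_all add: rep_mult)

lemma character_one: "character \<rho> \<one> = of_nat n"
  by (simp add: character_def mat_trace_one)

lemma cmod_eigenvalue_rep:
  assumes "finite (carrier G)" "g \<in> carrier G" "eigenvalue (\<rho> g) e"
  shows "cmod e = 1"
proof (rule cmod_eigenvalue_eq_1)
  show "\<rho> g ^\<^sub>m Coset.order G = 1\<^sub>m n"
    using assms(2) by (simp add: rep_pow pow_order_eq_1)
  show "Coset.order G > 0"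
    using assms(1) by (simp add: order_gt_0_iff_finite)
qed (use assms in auto)

lemma Re_character_ge:
  "finite (carrier G) \<Longrightarrow> g \<in> carrier G \<Longrightarrow> - real n \<le> Re (character \<rho> g)"
  unfolding character_def by (rule Re_mat_trace_ge) (auto dest: cmod_eigenvalue_rep)

lemma eigenspace_invariant:
  assumes A: "A \<in> carrier_mat n n" and comm: "\<And>g. g \<in> carrier G \<Longrightarrow> A * \<rho> g = \<rho> g * A"
  shows "invariant_subspace G n \<rho> {v \<in> carrier_vec n. A *\<^sub>v v = e \<cdot>\<^sub>v v}"
proof -
  have "A *\<^sub>v (\<rho> g *\<^sub>v v) = e \<cdot>\<^sub>v (\<rho> g *\<^sub>v v)"
    if g: "g \<in> carrier G" and v: "v \<in> carrier_vec n" "A *\<^sub>v v = e \<cdot>\<^sub>v v" for g v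
  proof -
    have "A *\<^sub>v (\<rho> g *\<^sub>v v) = (A * \<rho> g) *\<^sub>v v"
      using A g v by (simp add: assoc_mult_mat_vec[of _ n n _ n])
    also have "\<dots> = \<rho> g *\<^sub>v (e \<cdot>\<^sub>v v)"
      using A g v comm by (simp add: assoc_mult_mat_vec[of _ n n _ n])
    also have "\<dots> = e \<cdot>\<^sub>v (\<rho> g *\<^sub>v v)"
      using g v by (simp add: mult_mat_vec[of _ n n])
    finally show ?thesis .
  qed
  then show ?thesis
    using A unfolding invariant_subspace_def
    by (auto simp: mult_add_distrib_mat_vec smult_add_distrib_vec mult_mat_vec smult_smult_assoc
                   mult.commute intro: mult_mat_vec_carrier[OF rep_carrier])
qed

end

locale irreducible_group_rep = group G for G (structure) +
  fixes n :: nat and \<rho> :: "'a \<Rightarrow> complex mat"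
  assumes irreducible: "irreducible_representation G n \<rho>"

sublocale irreducible_group_rep \<subseteq> group_rep
  using irreducible by unfold_locales (simp add: irreducible_representation_def)

context irreducible_group_rep
begin

lemma dim_pos: "n > 0"
  using irreducible by (simp add: irreducible_representation_def)

lemma invariant_subspace_eq_carrier:
  "invariant_subspace G n \<rho> W \<Longrightarrow> W \<noteq> {0\<^sub>v n} \<Longrightarrow> W = carrier_vec n"
  using irreducible unfolding irreducible_representation_def by blast

lemma schur_lemma:
  assumes A: "A \<in> carrier_mat n n" and comm: "\<And>g. g \<in> carrier G \<Longrightarrow> A * \<rho> g = \<rho> g * A"
  obtains c where "A = c \<cdot>\<^sub>m 1\<^sub>m n"
proof -
  obtain e v where v: "eigenvector A v e"
    using eigenvalue_exists[OF A dim_pos] unfolding eigenvalue_def by blast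
  let ?W = "{v \<in> carrier_vec n. A *\<^sub>v v = e \<cdot>\<^sub>v v}"
  have "v \<in> ?W" "v \<noteq> 0\<^sub>v n"
    using v A unfolding eigenvector_def by auto
  then have "?W \<noteq> {0\<^sub>v n}"
    by auto
  then have W: "?W = carrier_vec n"
    by (intro invariant_subspace_eq_carrier eigenspace_invariant[OF A comm])
  have "A = e \<cdot>\<^sub>m 1\<^sub>m n"
  proof (rule eq_matI)
    fix i j assume "i < dim_row (e \<cdot>\<^sub>m 1\<^sub>m n)" "j < dim_col (e \<cdot>\<^sub>m 1\<^sub>m n)"
    then have ij: "i < n" "j < n" by simp_all
    have "unit_vec n j \<in> ?W"
      unfolding W by simp
    then have "(A *\<^sub>v unit_vec n j) $ i = (e \<cdot>\<^sub>v unit_vec n j) $ i"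
      by simp
    then show "A $$ (i, j) = (e \<cdot>\<^sub>m 1\<^sub>m n) $$ (i, j)"
      using A ij by simp
  qed (use A in auto)
  then show thesis ..
qed

end

section \<open>Schur orthogonality and sums of characters over commutators\<close>

lemma sum_if_mem_eq:
  assumes "finite A" "S \<subseteq> A"
  shows "(\<Sum>x\<in>A. if x \<in> S then a else b) = of_nat (card S) * a + of_nat (card A - card S) * b"
  using assms by (simp add: sum.If_cases Int_absorb1 Diff_eq[symmetric] card_Diff_subset finite_subset)

locale finite_irreducible_group_rep = irreducible_group_rep +
  assumes finite_carrier: "finite (carrier G)"
begin

lemma rep_conj_mult:
  assumes "B \<in> carrier_mat n n" "x \<in> carrier G" "g \<in> carrier G"
  shows "\<rho> (inv x) * B * \<rho> x * \<rho> g = \<rho> g * (\<rho> (inv (x \<otimes> g)) * B * \<rho> (x \<otimes> g))"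
  using assms
  by (simp add: inv_mult_group rep_mult mult_carrier_mat[of _ n n] left_mult_one_mat[of _ n n]
           flip: assoc_mult_mat[of _ n n _ n _ n])

lemma mat_sum_conj_eq_scalar:
  assumes B: "B \<in> carrier_mat n n"
  shows "mat_sum n (\<lambda>x. \<rho> (inv x) * B * \<rho> x) (carrier G)
           = (of_nat (card (carrier G)) * mat_trace B / of_nat n) \<cdot>\<^sub>m 1\<^sub>m n"
    (is "?M = _")
proof -
  have conj_carrier: "\<rho> (inv x) * B * \<rho> x \<in> carrier_mat n n" if "x \<in> carrier G" for x
    using B that by (simp add: mult_carrier_mat[of _ n n])
  have "?M * \<rho> g = \<rho> g * ?M" if g: "g \<in> carrier G" for g
  proof -
    have "?M * \<rho> g = mat_sum n (\<lambda>x. \<rho> g * (\<rho> (inv (x \<otimes> g)) * B * \<rho> (x \<otimes> g))) (carrier G)"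
      using B g by (simp add: mat_sum_mult conj_carrier rep_conj_mult cong: mat_sum_cong)
    also have "\<dots> = \<rho> g * mat_sum n (\<lambda>x. \<rho> (inv (x \<otimes> g)) * B * \<rho> (x \<otimes> g)) (carrier G)"
      using B g by (simp add: mult_mat_sum conj_carrier)
    also have "\<dots> = \<rho> g * ?M"
      using mat_sum_reindex_bij_betw[OF bij_betw_mult_right[OF g], of n "\<lambda>y. \<rho> (inv y) * B * \<rho> y"]
      by simp
    finally show ?thesis .
  qed
  then obtain c where c: "?M = c \<cdot>\<^sub>m 1\<^sub>m n"
    using schur_lemma[OF mat_sum_carrier] by blast
  have "mat_trace (\<rho> (inv x) * B * \<rho> x) = mat_trace B" if x: "x \<in> carrier G" for x
  proof -
    have "mat_trace (\<rho> (inv x) * B * \<rho> x) = mat_trace (\<rho> x * (\<rho> (inv x) * B))"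
      using B x by (intro mat_trace_mult_comm[of _ n n]) (auto simp: mult_carrier_mat[of _ n n])
    also have "\<rho> x * (\<rho> (inv x) * B) = B"
      using B x by (simp flip: assoc_mult_mat[of _ n n _ n _ n])
    finally show ?thesis .
  qed
  then have "mat_trace ?M = of_nat (card (carrier G)) * mat_trace B"
    by (simp add: mat_trace_mat_sum conj_carrier)
  moreover have "mat_trace ?M = c * of_nat n"
    by (simp add: c mat_trace_smult[of _ n] mat_trace_one)
  ultimately show ?thesis
    using c dim_pos by (simp add: field_simps)
qed

lemma schur_orthogonality:
  assumes "i < n" "j < n" "k < n" "l < n"
  shows "(\<Sum>x\<in>carrier G. \<rho> (inv x) $$ (i, k) * \<rho> x $$ (l, j))
           = (if i = j \<and> k = l then of_nat (card (carrier G)) / of_nat n else 0)"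
proof -
  have "(\<Sum>x\<in>carrier G. \<rho> (inv x) $$ (i, k) * \<rho> x $$ (l, j))
          = mat_sum n (\<lambda>x. \<rho> (inv x) * matrix_unit n k l * \<rho> x) (carrier G) $$ (i, j)"
    using assms by (simp add: index_mult_matrix_unit_mult)
  then show ?thesis
    using assms by (simp add: mat_sum_conj_eq_scalar mat_trace_matrix_unit)
qed

lemma sum_character_mult_rep_inv:
  assumes "k < n" "l < n"
  shows "(\<Sum>x\<in>carrier G. character \<rho> x * \<rho> (inv x) $$ (k, l))
           = (if k = l then of_nat (card (carrier G)) / of_nat n else 0)"
proof -
  have "(\<Sum>x\<in>carrier G. character \<rho> x * \<rho> (inv x) $$ (k, l))
          = (\<Sum>i<n. \<Sum>x\<in>carrier G. \<rho> (inv x) $$ (k, l) * \<rho> x $$ (i, i))"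
    by (simp add: character_def mat_trace_eq_sum[of _ n] sum_distrib_left sum_distrib_right
                  sum.swap[of _ "{..<n}"] mult.commute cong: sum.cong)
  also have "\<dots> = (\<Sum>i<n. if k = i \<and> l = i then of_nat (card (carrier G)) / of_nat n else 0)"
    using assms by (simp add: schur_orthogonality)
  finally show ?thesis
    using assms by (cases "k = l") auto
qed

lemma sum_character_mult_character:
  assumes g: "g \<in> carrier G"
  shows "(\<Sum>x\<in>carrier G. character \<rho> x * character \<rho> (g \<otimes> inv x))
           = of_nat (card (carrier G)) / of_nat n * character \<rho> g"
proof -
  have "(\<Sum>x\<in>carrier G. character \<rho> x * character \<rho> (g \<otimes> inv x))
          = (\<Sum>x\<in>carrier G. \<Sum>i<n. \<Sum>j<n.
               \<rho> g $$ (i, j) * (character \<rho> x * \<rho> (inv x) $$ (j, i)))"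
    using g by (intro sum.cong refl)
      (simp add: character_def rep_mult mat_trace_mult_eq_sum[of _ n n] sum_distrib_left mult_ac)
  also have "\<dots> = (\<Sum>i<n. \<Sum>j<n.
               \<rho> g $$ (i, j) * (\<Sum>x\<in>carrier G. character \<rho> x * \<rho> (inv x) $$ (j, i)))"
    by (simp add: sum_distrib_left sum.swap[of _ "carrier G"])
  also have "\<dots> = (\<Sum>i<n. \<rho> g $$ (i, i) * (of_nat (card (carrier G)) / of_nat n))"
    by (simp add: sum_character_mult_rep_inv if_distrib cong: if_cong)
  also have "\<dots> = of_nat (card (carrier G)) / of_nat n * character \<rho> g"
    unfolding character_def mat_trace_eq_sum[OF rep_carrier[OF g]] sum_distrib_right[symmetric]
    by (rule mult.commute)
  finally show ?thesis .
qed

lemma sum_character_conj: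
  assumes h: "h \<in> carrier G" and x: "x \<in> carrier G"
  shows "(\<Sum>y\<in>carrier G. character \<rho> (h \<otimes> (inv y \<otimes> x \<otimes> y)))
           = of_nat (card (carrier G)) * character \<rho> x / of_nat n * character \<rho> h"
proof -
  have "(\<Sum>y\<in>carrier G. character \<rho> (h \<otimes> (inv y \<otimes> x \<otimes> y)))
          = mat_trace (\<rho> h * mat_sum n (\<lambda>y. \<rho> (inv y) * \<rho> x * \<rho> y) (carrier G))"
    using h x by (simp add: character_def rep_mult mult_mat_sum mat_trace_mat_sum mult_carrier_mat[of _ n n])
  also have "\<dots> = mat_trace
                     (\<rho> h * ((of_nat (card (carrier G)) * character \<rho> x / of_nat n) \<cdot>\<^sub>m 1\<^sub>m n))"
    using x by (simp add: mat_sum_conj_eq_scalar character_def)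
  finally show ?thesis
    using h by (simp add: mult_smult_distrib[of _ n n _ n] right_mult_one_mat[of _ n n]
                          mat_trace_smult[of _ n] character_def)
qed

lemma sum_character_commutator:
  assumes g: "g \<in> carrier G"
  shows "(\<Sum>x\<in>carrier G. \<Sum>y\<in>carrier G. character \<rho> (g \<otimes> commutator G x y))
           = of_nat (card (carrier G)) ^ 2 / of_nat n ^ 2 * character \<rho> g"
proof -
  have "g \<otimes> commutator G x y = (g \<otimes> inv x) \<otimes> (inv y \<otimes> x \<otimes> y)"
    if "x \<in> carrier G" "y \<in> carrier G" for x y
    using g that by (simp add: commutator_def m_assoc)
  then have "(\<Sum>x\<in>carrier G. \<Sum>y\<in>carrier G. character \<rho> (g \<otimes> commutator G x y))
          = (\<Sum>x\<in>carrier G.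
               of_nat (card (carrier G)) / of_nat n * (character \<rho> x * character \<rho> (g \<otimes> inv x)))"
    using g by (simp add: sum_character_conj mult.assoc)
  also have "\<dots> = of_nat (card (carrier G)) ^ 2 / of_nat n ^ 2 * character \<rho> g"
    using g by (simp only: sum_distrib_left[symmetric] sum_character_mult_character) (simp add: power2_eq_square)
  finally show ?thesis .
qed

lemma Re_character_mult_commutator_ge:
  assumes "g \<in> carrier G" "x \<in> carrier G" "y \<in> carrier G"
  shows "(if commutator G x y = g then real n else - real n)
           \<le> Re (character \<rho> (g \<otimes> commutator G y x))"
proof (cases "commutator G x y = g")
  case True
  then have "g \<otimes> commutator G y x = \<one>"
    using assms by (simp add: commutator_swap[of x y])
  then show ?thesis
    using True by (simp add: character_one)
next
  case False
  then show ?thesis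
    using assms finite_carrier Re_character_ge by (simp add: commutator_def)
qed

lemma card_commutator_fibre_le:
  assumes g: "g \<in> carrier G"
  defines "N \<equiv> real (card {(x, y). x \<in> carrier G \<and> y \<in> carrier G \<and> commutator G x y = g})"
    and "C \<equiv> real (card (carrier G))"
  shows "real n * (2 * N - C ^ 2) \<le> C ^ 2 / real n ^ 2 * Re (character \<rho> g)"
proof -
  let ?S = "{(x, y). x \<in> carrier G \<and> y \<in> carrier G \<and> commutator G x y = g}"
  have S_sub: "?S \<subseteq> carrier G \<times> carrier G"
    by blast
  have "(\<Sum>x\<in>carrier G. \<Sum>y\<in>carrier G. character \<rho> (g \<otimes> commutator G y x))
          = of_nat (card (carrier G)) ^ 2 / of_nat n ^ 2 * character \<rho> g"
    by (subst sum.swap) (rule sum_character_commutator[OF g])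
  then have sum_Re: "(\<Sum>(x, y)\<in>carrier G \<times> carrier G. Re (character \<rho> (g \<otimes> commutator G y x)))
          = C ^ 2 / real n ^ 2 * Re (character \<rho> g)"
    unfolding C_def by (simp add: sum.cartesian_product[symmetric] flip: Re_sum)
  have "real n * (2 * N - C ^ 2)
          = of_nat (card ?S) * real n + of_nat (card (carrier G \<times> carrier G) - card ?S) * - real n"
    using card_mono[OF _ S_sub] finite_carrier
    by (simp add: card_cartesian_product of_nat_diff N_def C_def power2_eq_square algebra_simps)
  also have "\<dots> = (\<Sum>p\<in>carrier G \<times> carrier G. if p \<in> ?S then real n else - real n)"
    by (rule sum_if_mem_eq[symmetric]) (use S_sub finite_carrier in simp_all)
  also have "\<dots> \<le> (\<Sum>(x, y)\<in>carrier G \<times> carrier G. Re (character \<rho> (g \<otimes> commutator G y x)))"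
  proof (rule sum_mono)
    fix p assume "p \<in> carrier G \<times> carrier G"
    then obtain x y where "p = (x, y)" "x \<in> carrier G" "y \<in> carrier G"
      by blast
    then show "(if p \<in> ?S then real n else - real n)
                 \<le> (case p of (x, y) \<Rightarrow> Re (character \<rho> (g \<otimes> commutator G y x)))"
      using Re_character_mult_commutator_ge[OF g, of x y] by simp
  qed
  finally show ?thesis
    unfolding sum_Re .
qed

lemma comm_count_le:
  assumes g: "g \<in> carrier G"
  shows "comm_count G g \<le> (1 + Re (character \<rho> g) / real n ^ 3) / 2"
proof -
  define C where "C = real (card (carrier G))"
  define N where "N = real (card {(x, y). x \<in> carrier G \<and> y \<in> carrier G \<and> commutator G x y = g})"
  have "real n * (2 * N - C ^ 2) \<le> C ^ 2 / real n ^ 2 * Re (character \<rho> g)"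
    unfolding N_def C_def by (rule card_commutator_fibre_le[OF g])
  moreover have "C > 0" "real n > 0"
    using finite_carrier dim_pos by (auto simp: C_def card_gt_0_iff)
  ultimately have "N / C ^ 2 \<le> (1 + Re (character \<rho> g) / real n ^ 3) / 2"
    by (simp add: field_simps power3_eq_cube power2_eq_square)
  then show ?thesis
    by (simp add: comm_count_def N_def C_def)
qed

end

theorem corollary3:
  fixes G :: "('g, 'b) monoid_scheme" and n :: nat and \<rho> :: "'g \<Rightarrow> complex mat"
  assumes "group G" and "finite (carrier G)"
    and "irreducible_representation G n \<rho>"
  shows "(\<forall>g\<in>carrier G. comm_count G g \<le> (1 + Re (character \<rho> g) / real n ^ 3) / 2)
         \<and> comm_prob G \<le> (1 + 1 / real n ^ 2) / 2"
proof -
  interpret finite_irreducible_group_rep G n \<rho>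
    using assms
    by (simp add: finite_irreducible_group_rep_def finite_irreducible_group_rep_axioms_def
                  irreducible_group_rep_def irreducible_group_rep_axioms_def)
  have "comm_prob G \<le> (1 + Re (character \<rho> \<one>\<^bsub>G\<^esub>) / real n ^ 3) / 2"
    unfolding comm_prob_def by (rule comm_count_le) simp
  also have "Re (character \<rho> \<one>\<^bsub>G\<^esub>) / real n ^ 3 = 1 / real n ^ 2"
    using dim_pos by (simp add: character_one power3_eq_cube power2_eq_square)
  finally show ?thesis
    using comm_count_le by blast
qed

end
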